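(* Let $X$ be a connected separable Tychonoff space and let $Z$ be a topological space having the same multi-deck as $X$, i.e.\ there is a bijection $f\colon X \to Z$ such that $X\setminus\{x\}$ is homeomorphic to $Z \setminus\{f(x)\}$ for every $x \in X$. Then $Z$ is a connected separable Tychonoff space.
   Context: The multi-deck of a space $X$ is the multiset $\{[X\setminus\{x\}]_\sim : x \in X\}$ of homeomorphism classes of the subspaces $X\setminus\{x\}$, recording for each class how many points $x$ give it; two spaces have the same multi-deck exactly when there is a bijection $f\colon X\to Z$ with $X\setminus\{x\}\cong Z\setminus\{f(x)\}$ for all $x$. Tychonoff means completely regular and $T_1$. *)

theory Defs
  imports "HOL-Analysis.Analysis"
begin

definition tychonoff_space :: "'a topology \<Rightarrow> bool" where
  "tychonoff_space X \<longleftrightarrow> completely_regular_space X \<and> t1_space X"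

end

theory Submission
  imports Defs
begin

text \<open>Every punctured subspace of \<open>Z\<close> is homeomorphic to a punctured subspace of \<open>X\<close>, hence
  T1, completely regular and separable. These properties pass from all punctured subspaces to the
  whole space once it has at least three points, and \<open>X\<close> (so \<open>Z\<close>) is uncountable as soon as it
  has two points, being connected and Tychonoff.

  For connectedness, suppose \<open>Z = A \<union> B\<close> is a separation. Then \<open>Z\<close> has no isolated points, so
  every \<open>Z - {z}\<close>, and hence every \<open>X - {x}\<close>, is disconnected. Transporting this back along
  \<open>X - {y} \<cong> Z - {b}\<close> with \<open>b \<in> B\<close> shows that \<open>A - {a}\<close> is disconnected for \<open>a \<in> A\<close>, so every
  \<open>Z - {z}\<close>, and therefore every \<open>X - {x}\<close>, splits into three nonempty open pieces. In a connected
  space, a clopen piece of \<open>X - {x}\<close> avoiding \<open>y\<close> and a clopen piece of \<open>X - {y}\<close> avoiding \<open>x\<close> are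
  disjoint; so picking points of a countable dense set in the three pieces of each \<open>X - {x}\<close> gives
  an injection of \<open>X\<close> into a countable set, contradicting uncountability.\<close>

abbreviation punctured :: "'a topology \<Rightarrow> 'a \<Rightarrow> 'a topology" where
  "punctured X x \<equiv> subtopology X (topspace X - {x})"

definition deck_bijection :: "'a topology \<Rightarrow> 'b topology \<Rightarrow> ('a \<Rightarrow> 'b) \<Rightarrow> bool" where
  "deck_bijection X Z f \<longleftrightarrow> bij_betw f (topspace X) (topspace Z) \<and>
     (\<forall>x\<in>topspace X. punctured X x homeomorphic_space punctured Z (f x))"

lemma deck_bijectionD:
  assumes "deck_bijection X Z f" "x \<in> topspace X"
  shows "f x \<in> topspace Z" "punctured X x homeomorphic_space punctured Z (f x)"
  using assms by (auto simp: deck_bijection_def bij_betw_def)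

lemma deck_bijection_sym:
  assumes "deck_bijection X Z f"
  shows "deck_bijection Z X (inv_into (topspace X) f)"
proof -
  have bij: "bij_betw f (topspace X) (topspace Z)"
    using assms by (simp add: deck_bijection_def)
  have "punctured Z z homeomorphic_space punctured X (inv_into (topspace X) f z)"
    if "z \<in> topspace Z" for z
  proof -
    have "inv_into (topspace X) f z \<in> topspace X" "f (inv_into (topspace X) f z) = z"
      using that bij by (auto simp: bij_betw_def inv_into_into f_inv_into_f)
    then show ?thesis
      using assms by (metis deck_bijection_def homeomorphic_space_sym)
  qed
  then show ?thesis
    using bij by (simp add: deck_bijection_def bij_betw_inv_into)
qed

lemma deck_bijection_homeomorphic_punctured:
  assumes "deck_bijection X Z f" "z \<in> topspace Z"
  obtains x where "x \<in> topspace X" "punctured X x homeomorphic_space punctured Z z"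
  using deck_bijection_sym[OF assms(1)] assms(2) homeomorphic_space_sym
  unfolding deck_bijection_def bij_betw_def by blast

lemma openin_t1_delete:
  "t1_space X \<Longrightarrow> openin X U \<Longrightarrow> openin X (U - {x})"
  by (simp add: t1_space_openin_delete_alt)

lemma openin_punctured_iff:
  assumes "t1_space X"
  shows "openin (punctured X x) U \<longleftrightarrow> openin X U \<and> x \<notin> U"
  using openin_open_subtopology[OF openin_t1_delete[OF assms openin_topspace, of x], of U]
    openin_subset[of X U] by auto

lemma closedin_punctured_imp_closedin_insert:
  assumes "t1_space X" "x \<in> topspace X" "closedin (punctured X x) U"
  shows "closedin X (insert x U)"
proof -
  obtain K where "closedin X K" "U = K \<inter> (topspace X - {x})"
    using assms(3) closedin_subtopology by metis
  then have "insert x U = K \<union> {x}"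
    using assms(2) closedin_subset by auto
  then show ?thesis
    using \<open>closedin X K\<close> closedin_t1_singleton[OF assms(1,2)] by (metis closedin_Un)
qed

definition has_open_partition :: "'a topology \<Rightarrow> nat \<Rightarrow> bool" where
  "has_open_partition Y n \<longleftrightarrow> (\<exists>P. (\<forall>i<n. openin Y (P i) \<and> P i \<noteq> {}) \<and>
     disjoint_family_on P {..<n} \<and> (\<Union>i<n. P i) = topspace Y)"

lemma homeomorphic_has_open_partition:
  assumes "Y homeomorphic_space Y'" "has_open_partition Y' n"
  shows "has_open_partition Y n"
proof -
  obtain h where h: "homeomorphic_map Y Y' h"
    using assms(1) homeomorphic_space by blast
  obtain P where P: "\<forall>i<n. openin Y' (P i) \<and> P i \<noteq> {}" "disjoint_family_on P {..<n}"
    "(\<Union>i<n. P i) = topspace Y'"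
    using assms(2) by (auto simp: has_open_partition_def)
  define Q where "Q i = {x \<in> topspace Y. h x \<in> P i}" for i
  have "openin Y (Q i)" if "i < n" for i
    unfolding Q_def using P(1) that h homeomorphic_imp_continuous_map openin_continuous_map_preimage
    by blast
  moreover have "Q i \<noteq> {}" if i: "i < n" for i
  proof -
    obtain y where "y \<in> P i"
      using P(1) i by blast
    moreover have "y \<in> h ` topspace Y"
      using calculation P(3) i homeomorphic_imp_surjective_map[OF h] by blast
    ultimately show ?thesis
      by (auto simp: Q_def)
  qed
  moreover have "disjoint_family_on Q {..<n}"
    using P(2) by (auto simp: disjoint_family_on_def Q_def)
  moreover have "(\<Union>i<n. Q i) = topspace Y"
  proof
    show "topspace Y \<subseteq> (\<Union>i<n. Q i)"
    proof
      fix x assume "x \<in> topspace Y"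
      then have "h x \<in> (\<Union>i<n. P i)"
        using P(3) homeomorphic_imp_surjective_map[OF h] by blast
      then show "x \<in> (\<Union>i<n. Q i)"
        using \<open>x \<in> topspace Y\<close> by (auto simp: Q_def)
    qed
  qed (auto simp: Q_def)
  ultimately show ?thesis
    unfolding has_open_partition_def by blast
qed

lemma has_open_partition_3I:
  assumes "openin Y A" "openin Y B" "openin Y C" "A \<noteq> {}" "B \<noteq> {}" "C \<noteq> {}"
    "A \<inter> B = {}" "A \<inter> C = {}" "B \<inter> C = {}" "A \<union> B \<union> C = topspace Y"
  shows "has_open_partition Y 3"
  unfolding has_open_partition_def
proof (intro exI[of _ "\<lambda>i::nat. if i = 0 then A else if i = 1 then B else C"] conjI allI impI)
  show "disjoint_family_on (\<lambda>i::nat. if i = 0 then A else if i = 1 then B else C) {..<3}"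
    using assms(7-9) by (auto simp: disjoint_family_on_def Int_commute less_Suc_eq numeral_3_eq_3)
  show "(\<Union>i::nat<3. if i = 0 then A else if i = 1 then B else C) = topspace Y"
    using assms(10) by (auto simp: lessThan_nat_numeral)
qed (use assms(1-6) in auto)

lemma closedin_open_partition_piece:
  assumes "\<forall>i<n. openin Y (P i)" "disjoint_family_on P {..<n}" "(\<Union>i<n. P i) = topspace Y" "i < n"
  shows "closedin Y (P i)"
proof -
  have "topspace Y - P i = (\<Union>j\<in>{..<n} - {i}. P j)"
    using assms(2-4) by (auto simp: disjoint_family_on_def)
  then have "openin Y (topspace Y - P i)"
    using assms(1) by auto
  then show ?thesis
    using assms(3,4) by (auto simp: closedin_def)
qed

section \<open>Punctured subspaces of a connected T1 space\<close>

lemma uncountable_connected_completely_regular_space: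
  assumes "connected_space X" "completely_regular_space X" "t1_space X"
    and "a \<in> topspace X" "b \<in> topspace X" "a \<noteq> b"
  shows "uncountable (topspace X)"
proof
  assume countable: "countable (topspace X)"
  have "closedin X {b}" "a \<in> topspace X - {b}"
    using assms(3-6) closedin_t1_singleton by auto
  then obtain g :: "_ \<Rightarrow> real"
    where g: "continuous_map X (top_of_set {0..1}) g" "g a = 0" "g ` {b} \<subseteq> {1}"
    using assms(2) unfolding completely_regular_space_def by blast
  have "continuous_map X euclideanreal g"
    using g(1) continuous_map_in_subtopology by blast
  then have "connectedin euclideanreal (g ` topspace X)"
    using assms(1) connectedin_continuous_map_image connectedin_topspace by blast
  then have "connected (g ` topspace X)"
    by simp
  moreover have "0 \<in> g ` topspace X" "1 \<in> g ` topspace X"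
    using g assms(4,5) by force+
  ultimately have "{0..1} \<subseteq> g ` topspace X"
    using connected_contains_Icc by blast
  moreover have "uncountable {0..1::real}"
    by (simp add: uncountable_closed_interval)
  ultimately show False
    using countable countable_image countable_subset by blast
qed

lemma connected_space_punctured_clopen_disjoint:
  assumes X: "connected_space X" "t1_space X"
    and xy: "x \<in> topspace X" "y \<in> topspace X" "x \<noteq> y"
    and U: "openin (punctured X x) U" "closedin (punctured X x) U" "y \<notin> U"
    and V: "openin (punctured X y) V" "closedin (punctured X y) V" "x \<notin> V"
  shows "U \<inter> V = {}"
proof -
  have "U \<inter> V = insert x U \<inter> insert y V"
    using xy U(3) V(3) by auto
  then have "closedin X (U \<inter> V)"
    using closedin_punctured_imp_closedin_insert X(2) xy U(2) V(2) by (metis closedin_Int)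
  moreover have "openin X (U \<inter> V)"
    using U(1) V(1) X(2) by (simp add: openin_punctured_iff openin_Int)
  moreover have "U \<inter> V \<noteq> topspace X"
    using xy(1) U(1) X(2) by (auto simp: openin_punctured_iff)
  ultimately show ?thesis
    using X(1) connected_space_clopen_in by blast
qed

lemma connected_space_punctured_not_openin_singleton:
  assumes "connected_space X" "t1_space X" "x \<in> topspace X"
  shows "\<not> openin (punctured X x) {p}"
proof
  assume "openin (punctured X x) {p}"
  then have p: "openin X {p}" "p \<in> topspace X - {x}"
    using assms(2) openin_subset[of "punctured X x" "{p}"] by (auto simp: openin_punctured_iff)
  moreover have "closedin X {p}"
    using closedin_t1_singleton[OF assms(2)] p(2) by simp
  ultimately have "{p} = {} \<or> {p} = topspace X"
    using assms(1) by (meson connected_space_clopen_in)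
  then show False
    using assms(3) p(2) by auto
qed

lemma not_connected_space_separation_containing:
  assumes "\<not> connected_space Y" "p \<in> topspace Y"
  obtains P Q where "openin Y P" "openin Y Q" "P \<union> Q = topspace Y" "P \<inter> Q = {}"
    "Q \<noteq> {}" "p \<in> P"
proof -
  obtain E1 E2 where E: "openin Y E1" "openin Y E2" "E1 \<union> E2 = topspace Y" "E1 \<inter> E2 = {}"
    "E1 \<noteq> {}" "E2 \<noteq> {}"
    using assms(1) unfolding connected_space_eq by blast
  show thesis
  proof (cases "p \<in> E1")
    case True
    then show thesis
      using that[of E1 E2] E by simp
  next
    case False
    then have "p \<in> E2"
      using E(3) assms(2) by blast
    then show thesis
      using that[of E2 E1] E by (simp add: Un_commute Int_commute)
  qed
qed

lemma punctured_clopen_subset: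
  assumes X: "connected_space X" "t1_space X"
    and x: "x \<in> topspace X"
    and U: "openin (punctured X x) U" "closedin (punctured X x) U" "u \<in> U"
    and Q: "openin (punctured X u) Q" "closedin (punctured X u) Q" "x \<notin> Q"
  shows "Q \<subseteq> U"
proof -
  have Usub: "U \<subseteq> topspace X - {x}"
    using U(1) openin_subset by fastforce
  define V where "V = topspace (punctured X x) - U"
  have V: "openin (punctured X x) V" "closedin (punctured X x) V" "u \<notin> V"
    using openin_diff[OF openin_topspace U(2)] closedin_diff[OF closedin_topspace U(1)] U(3)
    by (simp_all add: V_def)
  have "u \<in> topspace X" "x \<noteq> u"
    using U(3) Usub by auto
  then have "V \<inter> Q = {}"
    using connected_space_punctured_clopen_disjoint[OF X x _ _ V Q] by blast
  moreover have "Q \<subseteq> topspace X - {u}"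
    using Q(1) openin_subset by fastforce
  ultimately show ?thesis
    using Q(3) by (auto simp: V_def)
qed

lemma punctured_clopen_not_connectedin_delete:
  assumes X: "connected_space X" "t1_space X"
    and cut: "\<forall>u\<in>topspace X. \<not> connected_space (punctured X u)"
    and x: "x \<in> topspace X"
    and U: "openin (punctured X x) U" "closedin (punctured X x) U" "U \<noteq> topspace X - {x}"
    and u: "u \<in> U"
  shows "\<not> connectedin X (U - {u})"
proof
  assume conn: "connectedin X (U - {u})"
  have Usub: "U \<subseteq> topspace X - {x}"
    using U(1) openin_subset by fastforce
  obtain P Q where PQ: "openin (punctured X u) P" "openin (punctured X u) Q"
      "P \<union> Q = topspace (punctured X u)" "P \<inter> Q = {}" "Q \<noteq> {}" "x \<in> P"
    by (rule not_connected_space_separation_containing[of "punctured X u" x]) (use cut u Usub x in auto)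
  have "Q = topspace (punctured X u) - P"
    using PQ(3,4) by blast
  then have "closedin (punctured X u) Q" "x \<notin> Q"
    using PQ(6) closedin_diff[OF closedin_topspace PQ(1)] by simp_all
  then have QU: "Q \<subseteq> U - {u}"
    using punctured_clopen_subset[OF X x U(1,2) u PQ(2)] PQ(3) by auto
  have cover: "P \<union> Q = topspace X - {u}"
    using PQ(3) by auto
  have P_open: "openin X P" and Q_open: "openin X Q"
    using PQ(1,2) X(2) by (simp_all add: openin_punctured_iff)
  have P_meets: "P \<inter> (U - {u}) \<noteq> {}"
  proof
    assume "P \<inter> (U - {u}) = {}"
    then have "topspace X - U = P"
      using cover QU u by blast
    then have "closedin X U"
      using P_open Usub unfolding closedin_def by blast
    moreover have "openin X U"
      using U(1) X(2) by (simp add: openin_punctured_iff)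
    ultimately have "U = {} \<or> U = topspace X"
      by (metis X(1) connected_space_clopen_in)
    then show False
      using u x Usub by auto
  qed
  have "U - {u} \<subseteq> P \<union> Q" "P \<inter> Q \<inter> (U - {u}) = {}" "Q \<inter> (U - {u}) \<noteq> {}"
    using QU PQ(4,5) cover Usub by blast+
  then show False
    using connectedinD[OF conn P_open Q_open _ _ P_meets] by blast
qed

lemma punctured_open_partitions_disjoint_piece:
  fixes P Q :: "nat \<Rightarrow> 'a set"
  assumes X: "connected_space X" "t1_space X"
    and xy: "x \<in> topspace X" "y \<in> topspace X" "x \<noteq> y" and n: "2 < n"
    and P: "\<forall>i<n. openin (punctured X x) (P i)" "disjoint_family_on P {..<n}"
      "(\<Union>i<n. P i) = topspace (punctured X x)"
    and Q: "\<forall>i<n. openin (punctured X y) (Q i)" "disjoint_family_on Q {..<n}"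
      "(\<Union>i<n. Q i) = topspace (punctured X y)"
  obtains i where "i < n" "P i \<inter> Q i = {}"
proof -
  obtain j where j: "j < n" "y \<in> P j"
    using P(3) xy by auto
  obtain k where k: "k < n" "x \<in> Q k"
    using Q(3) xy by auto
  have "\<exists>i. i < n \<and> i \<noteq> j \<and> i \<noteq> k"
    using n by presburger
  then obtain i where i: "i < n" "i \<noteq> j" "i \<noteq> k"
    by blast
  have "y \<notin> P i" "x \<notin> Q i"
    using i j k disjoint_family_onD[OF P(2), of i j] disjoint_family_onD[OF Q(2), of i k] by auto
  moreover have "openin (punctured X x) (P i)" "openin (punctured X y) (Q i)"
    using P(1) Q(1) i(1) by blast+
  ultimately have "P i \<inter> Q i = {}"
    using closedin_open_partition_piece[OF P i(1)] closedin_open_partition_piece[OF Q i(1)]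
    by (intro connected_space_punctured_clopen_disjoint[OF X xy])
  then show thesis
    by (rule that[OF i(1)])
qed

lemma countable_topspace_punctured_open_partition:
  fixes X :: "'a topology"
  assumes X: "connected_space X" "t1_space X" "separable_space X"
    and n: "2 < n" and partition: "\<forall>x\<in>topspace X. has_open_partition (punctured X x) n"
  shows "countable (topspace X)"
proof -
  obtain C where C: "countable C" "C \<subseteq> topspace X" "X closure_of C = topspace X"
    using X(3) unfolding separable_space_def by blast
  obtain P :: "'a \<Rightarrow> nat \<Rightarrow> 'a set" where P: "\<And>x. x \<in> topspace X \<Longrightarrow>
      (\<forall>i<n. openin (punctured X x) (P x i) \<and> P x i \<noteq> {}) \<and>
      disjoint_family_on (P x) {..<n} \<and> (\<Union>i<n. P x i) = topspace (punctured X x)"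
    using partition unfolding has_open_partition_def by metis
  have "\<exists>c. c \<in> C \<inter> P x i" if xi: "x \<in> topspace X" "i < n" for x i
  proof -
    obtain p where "p \<in> P x i"
      using P xi by blast
    moreover have "openin X (P x i)"
      using P[OF xi(1)] xi(2) X(2) by (simp add: openin_punctured_iff)
    moreover have "p \<in> X closure_of C"
      using calculation C(3) openin_subset[of X "P x i"] by blast
    ultimately show ?thesis
      by (auto simp: in_closure_of)
  qed
  then obtain d where d: "\<And>x i. x \<in> topspace X \<Longrightarrow> i < n \<Longrightarrow> d x i \<in> C \<inter> P x i"
    by metis
  define code where "code x = map (d x) [0..<n]" for x
  have "inj_on code (topspace X)"
  proof (rule inj_onI, rule ccontr)
    fix x y assume x: "x \<in> topspace X" and y: "y \<in> topspace X"
      and same: "code x = code y" and "x \<noteq> y"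
    have Px: "\<forall>i<n. openin (punctured X x) (P x i)" "disjoint_family_on (P x) {..<n}"
      "(\<Union>i<n. P x i) = topspace (punctured X x)"
      using P[OF x] by blast+
    have Py: "\<forall>i<n. openin (punctured X y) (P y i)" "disjoint_family_on (P y) {..<n}"
      "(\<Union>i<n. P y i) = topspace (punctured X y)"
      using P[OF y] by blast+
    obtain i where "i < n" "P x i \<inter> P y i = {}"
      by (rule punctured_open_partitions_disjoint_piece[OF X(1,2) x y \<open>x \<noteq> y\<close> n Px Py])
    moreover have "d x i = d y i"
      using same \<open>i < n\<close> by (simp add: code_def map_eq_conv)
    ultimately show False
      using d[OF x \<open>i < n\<close>] d[OF y \<open>i < n\<close>] by auto
  qed
  moreover have "code ` topspace X \<subseteq> lists C"
    using d by (force simp: code_def)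
  then have "countable (code ` topspace X)"
    by (rule countable_subset) (simp add: C(1))
  ultimately show ?thesis
    using countable_image_inj_on by blast
qed

section \<open>Properties inherited from punctured subspaces\<close>

lemma separable_space_of_punctured:
  assumes "\<forall>w\<in>topspace Z. separable_space (punctured Z w)"
  shows "separable_space Z"
proof (cases "topspace Z = {}")
  case True
  then show ?thesis
    unfolding separable_space_def by (intro exI[of _ "{}"]) auto
next
  case False
  then obtain w where w: "w \<in> topspace Z"
    by blast
  obtain C where C: "countable C" "C \<subseteq> topspace (punctured Z w)"
    "punctured Z w closure_of C = topspace (punctured Z w)"
    using assms w unfolding separable_space_def by blast
  have wC: "insert w C \<subseteq> topspace Z"
    using C(2) w by auto
  have "topspace Z - {w} \<subseteq> Z closure_of C"
    using C(3) closure_of_subtopology_subset[of Z "topspace Z - {w}" C] by auto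
  also have "\<dots> \<subseteq> Z closure_of (insert w C)"
    by (rule closure_of_mono) blast
  finally have "topspace Z \<subseteq> Z closure_of (insert w C)"
    using closure_of_subset[OF wC] by blast
  then have "Z closure_of (insert w C) = topspace Z"
    by (simp add: closure_of_subset_topspace subset_antisym)
  then show ?thesis
    unfolding separable_space_def using C(1) wC by (intro exI[of _ "insert w C"]) auto
qed

lemma t1_space_of_punctured:
  assumes "infinite (topspace Z)" "\<forall>w\<in>topspace Z. t1_space (punctured Z w)"
  shows "t1_space Z"
  unfolding t1_space_def
proof (intro ballI impI)
  fix x y assume xy: "x \<in> topspace Z" "y \<in> topspace Z" "x \<noteq> y"
  obtain w where w: "w \<in> topspace Z" "w \<noteq> x" "w \<noteq> y"
    using assms(1) infinite_imp_nonempty[of "topspace Z - {x, y}"] by auto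
  have "t1_space (punctured Z w)"
    using assms(2) w(1) by blast
  moreover have "x \<in> topspace (punctured Z w)" "y \<in> topspace (punctured Z w)"
    using xy w by auto
  ultimately obtain U where U: "openin (punctured Z w) U" "x \<in> U" "y \<notin> U"
    using xy(3) unfolding t1_space_def by blast
  then obtain T where "openin Z T" "U = T \<inter> (topspace Z - {w})"
    by (auto simp: openin_subtopology)
  then show "\<exists>U. openin Z U \<and> x \<in> U \<and> y \<notin> U"
    using U w by blast
qed

lemma Hausdorff_space_of_punctured:
  assumes "t1_space Z" "\<forall>w\<in>topspace Z. Hausdorff_space (punctured Z w)"
  shows "Hausdorff_space Z"
  unfolding Hausdorff_space_def
proof (intro allI impI)
  fix x y assume xy: "x \<in> topspace Z \<and> y \<in> topspace Z \<and> x \<noteq> y"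
  show "\<exists>U V. openin Z U \<and> openin Z V \<and> x \<in> U \<and> y \<in> V \<and> disjnt U V"
  proof (cases "topspace Z \<subseteq> {x, y}")
    case True
    have "openin Z (topspace Z - {p})" for p
      using openin_t1_delete[OF assms(1) openin_topspace] by blast
    moreover have "disjnt (topspace Z - {y}) (topspace Z - {x})"
      using True by (auto simp: disjnt_def)
    ultimately show ?thesis
      using xy by (intro exI[of _ "topspace Z - {y}"] exI[of _ "topspace Z - {x}"]) auto
  next
    case False
    then obtain w where w: "w \<in> topspace Z" "w \<noteq> x" "w \<noteq> y"
      by blast
    have "Hausdorff_space (punctured Z w)"
      using assms(2) w(1) by blast
    moreover have "x \<in> topspace (punctured Z w)" "y \<in> topspace (punctured Z w)"
      using xy w by auto
    ultimately obtain U V where "openin (punctured Z w) U" "openin (punctured Z w) V"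
      "x \<in> U" "y \<in> V" "disjnt U V"
      using xy unfolding Hausdorff_space_def by blast
    then show ?thesis
      using assms(1) by (auto simp: openin_punctured_iff)
  qed
qed

lemma continuous_map_if_open_cover:
  assumes "openin Z A" "openin Z B" "A \<union> B = topspace Z"
    and "continuous_map (subtopology Z A) Y f" "continuous_map (subtopology Z B) Y g"
    and "\<And>x. x \<in> A \<Longrightarrow> x \<in> B \<Longrightarrow> f x = g x"
  shows "continuous_map Z Y (\<lambda>x. if x \<in> A then f x else g x)"
proof (rule pasting_lemma[where I = "{True, False}" and T = "\<lambda>b. if b then A else B"
      and f = "\<lambda>b. if b then f else g"])
  show "\<exists>j. j \<in> {True, False} \<and> x \<in> (if j then A else B) \<and>
          (if x \<in> A then f x else g x) = (if j then f else g) x" if "x \<in> topspace Z" for x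
    using that assms(3) by (cases "x \<in> A") auto
qed (use assms in \<open>auto split: if_splits\<close>)

lemma separating_function_from_punctured:
  assumes t1: "t1_space Z" and cr: "completely_regular_space (punctured Z w)"
    and C: "closedin Z C" "z \<in> topspace Z" "z \<notin> C" "w \<in> topspace Z" "w \<notin> C"
    and UV: "openin Z U" "openin Z V" "z \<in> U" "w \<in> V" "disjnt U V"
  shows "\<exists>f::_\<Rightarrow>real. continuous_map Z (top_of_set {0..1}) f \<and> f z = 0 \<and> f ` C \<subseteq> {1}"
proof -
  define C' where "C' = (C \<union> (topspace Z - U)) - {w}"
  have "closedin (punctured Z w) C'"
    unfolding closedin_subtopology C'_def
    using C(1) UV(1) closedin_subset[OF C(1)] by (intro exI[of _ "C \<union> (topspace Z - U)"]) auto
  moreover have "z \<in> topspace (punctured Z w) - C'"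
    using C(2,3) UV(3-5) by (auto simp: C'_def disjnt_def)
  ultimately obtain g :: "_ \<Rightarrow> real"
    where g: "continuous_map (punctured Z w) (top_of_set {0..1}) g" "g z = 0" "g ` C' \<subseteq> {1}"
    using cr unfolding completely_regular_space_def by blast
  define f where "f x = (if x \<in> topspace Z - {w} then g x else 1)" for x
  have "continuous_map Z (top_of_set {0..1}) f"
    unfolding f_def
  proof (rule continuous_map_if_open_cover[OF openin_t1_delete[OF t1 openin_topspace] UV(2)])
    show "topspace Z - {w} \<union> V = topspace Z"
      using UV(2,4) openin_subset C(4) by blast
    show "g x = 1" if "x \<in> topspace Z - {w}" "x \<in> V" for x
      using that UV(5) g(3) by (auto simp: C'_def disjnt_def)
  qed (use g(1) in auto)
  moreover have "f ` C \<subseteq> {1}"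
    using g(3) closedin_subset[OF C(1)] C(5) by (auto simp: f_def C'_def)
  moreover have "f z = 0"
    using g(2) C(2) UV(3-5) by (auto simp: f_def disjnt_def)
  ultimately show ?thesis
    by blast
qed

lemma completely_regular_space_of_punctured:
  assumes t1: "t1_space Z" and cr: "\<forall>w\<in>topspace Z. completely_regular_space (punctured Z w)"
  shows "completely_regular_space Z"
  unfolding completely_regular_space_def
proof (intro allI impI)
  fix C z assume "closedin Z C \<and> z \<in> topspace Z - C"
  then have C: "closedin Z C" and z: "z \<in> topspace Z" "z \<notin> C"
    by auto
  show "\<exists>f::_\<Rightarrow>real. continuous_map Z (top_of_set {0..1}) f \<and> f z = 0 \<and> f ` C \<subseteq> {1}"
  proof (cases "C = topspace Z - {z}")
    case True
    then have "openin Z {z}"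
      using C z(1) by (simp add: closedin_def Diff_Diff_Int inf.absorb2)
    then have "continuous_map Z (top_of_set {0..1}) (\<lambda>x. if x \<in> {z} then 0 else 1::real)"
      by (rule continuous_map_if_open_cover[OF _ openin_t1_delete[OF t1 openin_topspace]])
        (use z in auto)
    then show ?thesis
      using True by (intro exI[of _ "\<lambda>x. if x \<in> {z} then 0 else 1::real"]) auto
  next
    case False
    then obtain w where w: "w \<in> topspace Z" "w \<notin> C" "w \<noteq> z"
      using closedin_subset[OF C] z by auto
    have "Hausdorff_space (punctured Z p)" if "p \<in> topspace Z" for p
      using cr that t1_space_subtopology[OF t1]
      by (simp add: completely_regular_imp_regular_space regular_t1_imp_Hausdorff_space)
    then have "Hausdorff_space Z"
      using Hausdorff_space_of_punctured[OF t1] by blast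
    then obtain U V where UV: "openin Z U" "openin Z V" "z \<in> U" "w \<in> V" "disjnt U V"
      using z(1) w(1,3) unfolding Hausdorff_space_def by blast
    show ?thesis
      using cr w(1) by (intro separating_function_from_punctured[OF t1 _ C z w(1,2) UV]) blast
  qed
qed

lemma connected_t1_space_subsingleton:
  assumes "\<And>p q. p \<in> topspace Z \<Longrightarrow> q \<in> topspace Z \<Longrightarrow> p = q"
  shows "connected_space Z" "t1_space Z"
proof -
  show "connected_space Z"
    unfolding connected_space_eq
  proof (intro notI, elim exE conjE)
    fix E1 E2 assume "openin Z E1" "openin Z E2" "E1 \<union> E2 = topspace Z" "E1 \<inter> E2 = {}"
      "E1 \<noteq> {}" "E2 \<noteq> {}"
    then obtain p q where "p \<in> E1" "q \<in> E2" "p \<in> topspace Z" "q \<in> topspace Z"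
      by blast
    then show False
      using assms \<open>E1 \<inter> E2 = {}\<close> by blast
  qed
  show "t1_space Z"
    unfolding t1_space_def using assms by blast
qed

lemma deck_bijection_punctured_t1_completely_regular_separable:
  assumes deck: "deck_bijection X Z f" and w: "w \<in> topspace Z"
    and X: "t1_space X" "completely_regular_space X" "separable_space X"
  shows "t1_space (punctured Z w)" "completely_regular_space (punctured Z w)"
    "separable_space (punctured Z w)"
proof -
  obtain x where "x \<in> topspace X" and hom: "punctured X x homeomorphic_space punctured Z w"
    using deck_bijection_homeomorphic_punctured[OF deck w] by blast
  have "t1_space (punctured X x)" "completely_regular_space (punctured X x)"
    "separable_space (punctured X x)"
    using t1_space_subtopology[OF X(1)] completely_regular_space_subtopology[OF X(2)]
      separable_space_open_subset[OF X(3) openin_t1_delete[OF X(1) openin_topspace]]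
    by blast+
  then show "t1_space (punctured Z w)" "completely_regular_space (punctured Z w)"
    "separable_space (punctured Z w)"
    by (simp_all add: homeomorphic_t1_space[OF hom] homeomorphic_completely_regular_space[OF hom]
        homeomorphic_separable_space[OF hom])
qed

section \<open>Connectedness\<close>

lemma punctured_homeomorphic_not_openin_singleton:
  assumes X: "connected_space X" "t1_space X" "x \<in> topspace X"
    and hom: "punctured X x homeomorphic_space punctured Z w"
    and z: "z \<in> topspace Z" "z \<noteq> w"
  shows "\<not> openin Z {z}"
proof
  assume "openin Z {z}"
  then have "openin (punctured Z w) {z}"
    using z by (auto simp: openin_subtopology intro!: exI[of _ "{z}"])
  obtain g where g: "homeomorphic_map (punctured Z w) (punctured X x) g"
    using hom homeomorphic_space homeomorphic_space_sym by metis
  have "{z} \<subseteq> topspace (punctured Z w)"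
    using z by simp
  then have "openin (punctured X x) (g ` {z})"
    using homeomorphic_map_openness[OF g] \<open>openin (punctured Z w) {z}\<close> by blast
  then show False
    using connected_space_punctured_not_openin_singleton[OF X] by simp
qed

lemma punctured_homeomorphic_clopen_not_connectedin_delete:
  assumes X: "connected_space X" "t1_space X"
    and cut: "\<forall>u\<in>topspace X. \<not> connected_space (punctured X u)"
    and y: "y \<in> topspace X" and hom: "punctured X y homeomorphic_space punctured Z b"
    and A: "openin (punctured Z b) A" "closedin (punctured Z b) A" "A \<noteq> topspace Z - {b}"
    and a: "a \<in> A"
  shows "\<not> connectedin Z (A - {a})"
proof
  assume conn: "connectedin Z (A - {a})"
  obtain g where g: "homeomorphic_map (punctured Z b) (punctured X y) g"
    using hom homeomorphic_space homeomorphic_space_sym by metis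
  have Asub: "A \<subseteq> topspace (punctured Z b)"
    using A(1) openin_subset by blast
  have inj: "inj_on g (topspace (punctured Z b))"
    and surj: "g ` topspace (punctured Z b) = topspace (punctured X y)"
    using g homeomorphic_imp_injective_map homeomorphic_imp_surjective_map by blast+
  have W: "openin (punctured X y) (g ` A)" "closedin (punctured X y) (g ` A)"
    using homeomorphic_map_openness[OF g Asub] homeomorphic_map_closedness[OF g Asub] A(1,2)
    by simp_all
  have "g ` A \<noteq> g ` topspace (punctured Z b)"
    using inj_on_image_eq_iff[OF inj Asub subset_refl] A(3) by auto
  then have "g ` A \<noteq> topspace X - {y}"
    using surj by (simp add: Int_absorb1)
  then have "\<not> connectedin X (g ` A - {g a})"
    by (rule punctured_clopen_not_connectedin_delete[OF X cut y W _ imageI[OF a]])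
  moreover have "g ` (A - {a}) = g ` A - {g a}"
    using inj_on_image_set_diff[OF inj, of A "{a}"] Asub a by auto
  moreover have "connectedin (punctured Z b) (A - {a})"
    using conn Asub by (auto simp: connectedin_subtopology)
  then have "connectedin (punctured X y) (g ` (A - {a}))"
    using homeomorphic_map_connectedness[OF g] Asub by blast
  ultimately show False
    by (simp add: connectedin_subtopology)
qed

lemma has_open_partition_3_punctured_of_separation:
  assumes Z: "t1_space Z"
    and AB: "openin Z A" "openin Z B" "A \<union> B = topspace Z" "A \<inter> B = {}" "B \<noteq> {}"
    and z: "z \<in> A" and nc: "\<not> connectedin Z (A - {z})"
  shows "has_open_partition (punctured Z z) 3"
proof -
  have "A - {z} \<subseteq> topspace Z"
    using AB(3) by blast
  then obtain E1 E2 where E: "openin Z E1" "openin Z E2" "A - {z} \<subseteq> E1 \<union> E2"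
    "E1 \<inter> E2 \<inter> (A - {z}) = {}" "E1 \<inter> (A - {z}) \<noteq> {}" "E2 \<inter> (A - {z}) \<noteq> {}"
    using nc unfolding connectedin by blast
  have "openin Z (A - {z})"
    using openin_t1_delete[OF Z AB(1)] .
  then have "openin (punctured Z z) (E1 \<inter> (A - {z}))" "openin (punctured Z z) (E2 \<inter> (A - {z}))"
    "openin (punctured Z z) B"
    using E(1,2) AB(2,4) z Z by (auto simp: openin_punctured_iff)
  then show ?thesis
    by (rule has_open_partition_3I) (use E AB z in auto)
qed

lemma punctured_not_connected_of_separation:
  assumes Z: "t1_space Z"
    and AB: "openin Z A" "openin Z B" "A \<union> B = topspace Z" "A \<inter> B = {}" "B \<noteq> {}"
    and z: "z \<in> A" and not_isolated: "\<not> openin Z {z}"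
  shows "\<not> connected_space (punctured Z z)"
proof -
  have "A \<noteq> {z}"
    using AB(1) not_isolated by blast
  then have "A - {z} \<noteq> {}"
    using z by blast
  moreover have "openin (punctured Z z) (A - {z})" "openin (punctured Z z) B"
    using openin_t1_delete[OF Z AB(1)] Z AB(2,4) z by (auto simp: openin_punctured_iff)
  moreover have "(A - {z}) \<union> B = topspace (punctured Z z)" "(A - {z}) \<inter> B = {}"
    using AB(3,4) z by auto
  ultimately show ?thesis
    using AB(5) unfolding connected_space_eq by blast
qed

lemma separation_delete_not_connectedin:
  assumes X: "connected_space X" "t1_space X"
    and cut: "\<forall>u\<in>topspace X. \<not> connected_space (punctured X u)"
    and Z: "t1_space Z"
    and AB: "openin Z A" "openin Z B" "A \<union> B = topspace Z" "A \<inter> B = {}"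
    and b: "b \<in> B" "B \<noteq> {b}"
    and y: "y \<in> topspace X" "punctured X y homeomorphic_space punctured Z b"
    and a: "a \<in> A"
  shows "\<not> connectedin Z (A - {a})"
proof -
  have "A \<noteq> topspace Z - {b}"
    using AB(3,4) b by blast
  moreover have "A = topspace (punctured Z b) - (B - {b})"
    using AB(3,4) b(1) by auto
  moreover have "openin (punctured Z b) A" "openin (punctured Z b) (B - {b})"
    using openin_t1_delete[OF Z AB(2)] Z AB(1,4) b(1) by (auto simp: openin_punctured_iff)
  ultimately show ?thesis
    using punctured_homeomorphic_clopen_not_connectedin_delete[OF X cut y] a
    by (metis closedin_diff closedin_topspace)
qed

lemma connected_space_of_deck_bijection:
  assumes deck: "deck_bijection X Z f"
    and X: "connected_space X" "separable_space X" "t1_space X" "uncountable (topspace X)"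
    and Z: "t1_space Z"
  shows "connected_space Z"
proof (rule ccontr)
  assume disconnected: "\<not> connected_space Z"
  have not_isolated: "\<not> openin Z {z}" if z: "z \<in> topspace Z" for z
  proof -
    obtain A B where "openin Z A" "openin Z B" "A \<union> B = topspace Z" "A \<inter> B = {}" "B \<noteq> {}" "z \<in> A"
      by (rule not_connected_space_separation_containing[OF disconnected z])
    then obtain w where w: "w \<in> topspace Z" "z \<noteq> w"
      by blast
    obtain y where y: "y \<in> topspace X" "punctured X y homeomorphic_space punctured Z w"
      using deck_bijection_homeomorphic_punctured[OF deck w(1)] by blast
    show ?thesis
      by (rule punctured_homeomorphic_not_openin_singleton[OF X(1,3) y z w(2)])
  qed
  have cut: "\<forall>u\<in>topspace X. \<not> connected_space (punctured X u)"
  proof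
    fix u assume u: "u \<in> topspace X"
    obtain A B where AB: "openin Z A" "openin Z B" "A \<union> B = topspace Z" "A \<inter> B = {}" "B \<noteq> {}"
      "f u \<in> A"
      by (rule not_connected_space_separation_containing[OF disconnected deck_bijectionD(1)[OF deck u]])
    have "\<not> connected_space (punctured Z (f u))"
      by (rule punctured_not_connected_of_separation[OF Z AB not_isolated[OF deck_bijectionD(1)[OF deck u]]])
    then show "\<not> connected_space (punctured X u)"
      using homeomorphic_connected_space[OF deck_bijectionD(2)[OF deck u]] by blast
  qed
  have three: "has_open_partition (punctured Z z) 3" if z: "z \<in> topspace Z" for z
  proof -
    obtain A B where AB: "openin Z A" "openin Z B" "A \<union> B = topspace Z" "A \<inter> B = {}" "B \<noteq> {}"
      "z \<in> A"
      by (rule not_connected_space_separation_containing[OF disconnected z])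
    then obtain b where b: "b \<in> B" "b \<in> topspace Z"
      by blast
    obtain y where y: "y \<in> topspace X" "punctured X y homeomorphic_space punctured Z b"
      using deck_bijection_homeomorphic_punctured[OF deck b(2)] by blast
    have "B \<noteq> {b}"
      using AB(2) not_isolated[OF b(2)] by blast
    then have "\<not> connectedin Z (A - {z})"
      by (rule separation_delete_not_connectedin[OF X(1,3) cut Z AB(1-4) b(1) _ y AB(6)])
    then show ?thesis
      by (rule has_open_partition_3_punctured_of_separation[OF Z AB])
  qed
  have "has_open_partition (punctured X x) 3" if x: "x \<in> topspace X" for x
    by (rule homeomorphic_has_open_partition[OF deck_bijectionD(2)[OF deck x]
          three[OF deck_bijectionD(1)[OF deck x]]])
  then show False
    using countable_topspace_punctured_open_partition[OF X(1,3,2), of 3] X(4) by simp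
qed

lemma connected_t1_space_of_deck_bijection:
  assumes deck: "deck_bijection X Z f"
    and X: "connected_space X" "separable_space X" "t1_space X" "completely_regular_space X"
  shows "connected_space Z \<and> t1_space Z"
proof -
  have bij: "bij_betw f (topspace X) (topspace Z)"
    using deck by (simp add: deck_bijection_def)
  show ?thesis
  proof (cases "\<exists>a\<in>topspace X. \<exists>b\<in>topspace X. a \<noteq> b")
    case True
    then have uncountable: "uncountable (topspace X)"
      using uncountable_connected_completely_regular_space[OF X(1,4,3)] by blast
    then have "infinite (topspace Z)"
      using countable_finite bij_betw_finite[OF bij] by blast
    moreover have "\<forall>w\<in>topspace Z. t1_space (punctured Z w)"
      by (simp add: deck_bijection_punctured_t1_completely_regular_separable(1)[OF deck _ X(3,4,2)])
    ultimately have "t1_space Z"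
      by (rule t1_space_of_punctured)
    then show ?thesis
      using connected_space_of_deck_bijection[OF deck X(1-3) uncountable] by simp
  next
    case False
    have single: "p = q" if "p \<in> topspace Z" "q \<in> topspace Z" for p q
    proof -
      have "p \<in> f ` topspace X" "q \<in> f ` topspace X"
        using that bij_betw_imp_surj_on[OF bij] by simp_all
      then obtain a b where ab: "a \<in> topspace X" "b \<in> topspace X" "p = f a" "q = f b"
        by (elim imageE)
      then have "a = b"
        using False by auto
      then show ?thesis
        using ab by simp
    qed
    show ?thesis
      using connected_t1_space_subsingleton[OF single] by simp
  qed
qed

theorem theorem7p4:
  fixes X :: "'a topology" and Z :: "'b topology" and f :: "'a \<Rightarrow> 'b"
  assumes "connected_space X" and "separable_space X" and "tychonoff_space X"
    and "bij_betw f (topspace X) (topspace Z)"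
    and "\<forall>x \<in> topspace X.
           subtopology X (topspace X - {x}) homeomorphic_space
           subtopology Z (topspace Z - {f x})"
  shows "connected_space Z \<and> separable_space Z \<and> tychonoff_space Z"
proof -
  have deck: "deck_bijection X Z f"
    using assms(4,5) by (simp add: deck_bijection_def)
  have X: "t1_space X" "completely_regular_space X"
    using assms(3) by (auto simp: tychonoff_space_def)
  note punctured_Z = deck_bijection_punctured_t1_completely_regular_separable[OF deck _ X assms(2)]
  have Z: "connected_space Z" "t1_space Z"
    using connected_t1_space_of_deck_bijection[OF deck assms(1,2) X] by auto
  have "completely_regular_space Z"
    by (rule completely_regular_space_of_punctured[OF Z(2)]) (simp add: punctured_Z(2))
  moreover have "separable_space Z"
    by (rule separable_space_of_punctured) (simp add: punctured_Z(3))
  ultimately show ?thesis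
    using Z by (simp add: tychonoff_space_def)
qed

end
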